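(* Let $S\in\mathbb{R}^{n\times n_s}$ and $T\in\mathbb{R}^{n\times n_t}$, and let $\mathcal{C}_{\mathrm{LP}}=\{M\in\mathbb{R}_{\ge0}^{n_s\times n_t} : SM=T\}$, with $d$ its (affine) dimension. Let $\mathcal{F}_{\mathrm{LP}}=\{x\in\mathbb{R}^{1\times n_s} : |\{xM : M\in\mathcal{C}_{\mathrm{LP}}\}|=1\}$. Let $X$ be a finite set of test inputs (row vectors in $\mathbb{R}^{1\times n_s}$). Let $M_1$ be any mapping in $\mathcal{C}_{\mathrm{LP}}$, and let $\mathrm{vec}(M_2)$ be sampled from a proper density (absolutely continuous w.r.t. $d$-dimensional Lebesgue measure) over a $d$-dimensional ball lying in $\mathcal{C}_{\mathrm{LP}}$ centered at $\mathrm{vec}(M_1)$. Then, with probability 1, for all $x\in X$, $xM_1=xM_2$ implies $x\in\mathcal{F}_{\mathrm{LP}}$.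
   Context: $\mathrm{vec}(M)$ denotes the vectorization of the matrix $M$. Rows of $S$ are count vectors of training inputs (bags of source atoms over $n_s$ types) and rows of $T$ the corresponding output count vectors (over $n_t$ target atom types); a (relaxed) mapping is a real nonnegative matrix $M$ with output $xM$ on input $x$. A $d$-dimensional ball lying in $\mathcal{C}_{\mathrm{LP}}$ means a ball of dimension $d$ within the affine hull of $\mathcal{C}_{\mathrm{LP}}$ and contained in $\mathcal{C}_{\mathrm{LP}}$. *)

theory Defs
  imports "HOL-Analysis.Analysis" "HOL-Probability.Probability"
begin

definition orthonormal_list :: "'a::real_inner list \<Rightarrow> bool" where
  "orthonormal_list bs \<longleftrightarrow>
     (\<forall>i<length bs. \<forall>j<length bs. inner (bs ! i) (bs ! j) = (if i = j then 1 else 0))"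

text \<open>The d-dimensional Lebesgue measure on the affine hull of a set A (d = aff_dim A):
  the push-forward of Lebesgue measure on R^d (realised as the product of length bs
  copies of lborel) under an isometric affine parametrisation  z \<mapsto> a + \<Sum> z_i b_i,
  where a \<in> A and bs is an orthonormal basis of the direction space span (A - a).\<close>
definition lebesgue_on_affine :: "'a::euclidean_space set \<Rightarrow> 'a measure" where
  "lebesgue_on_affine A =
     (let a = (SOME a. a \<in> A);
          bs = (SOME bs. orthonormal_list bs \<and> span (set bs) = span ((\<lambda>x. x - a) ` A))
      in distr (PiM {..<length bs} (\<lambda>_. lborel)) borel
               (\<lambda>z. a + (\<Sum>i<length bs. z i *\<^sub>R bs ! i)))"

text \<open>Feasible relaxed mappings: nonnegative M (rows indexed by source types 's,
  columns by target types 't) with S M = T.\<close>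
definition C_LP :: "real^'s^'n \<Rightarrow> real^'t^'n \<Rightarrow> (real^'t^'s) set" where
  "C_LP S T = {M. (\<forall>i j. 0 \<le> M $ i $ j) \<and> S ** M = T}"

definition F_LP :: "real^'s^'n \<Rightarrow> real^'t^'n \<Rightarrow> (real^'s) set" where
  "F_LP S T = {x. card {x v* M | M. M \<in> C_LP S T} = 1}"

end

theory Submission
  imports Defs
begin

text \<open>In the isometric coordinates underlying the Lebesgue measure on the
  affine hull of \<open>C_LP S T\<close>, the map \<open>M \<mapsto> x v* M\<close> is affine. If \<open>x \<notin> F_LP S T\<close> it is
  non-constant on \<open>C_LP S T\<close>, so some component of it has a nonzero coefficient and the
  level set \<open>{M. x v* M = x v* M1}\<close> is contained in a hyperplane of the coordinate
  space, which is a null set. By absolute continuity it is \<open>P\<close>-null as well, and a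
  finite union over \<open>X\<close> of such sets is still null.\<close>

lemma linear_vector_matrix_mult: "linear (\<lambda>M::real^'t^'s. x v* M)"
  by (rule linearI)
    (auto simp: vector_matrix_mult_def vec_eq_iff sum.distrib sum_distrib_left algebra_simps)

lemma orthonormal_list_spanning:
  fixes A :: "'a::euclidean_space set"
  obtains bs where "orthonormal_list bs" "span (set bs) = span A"
proof -
  obtain B where B: "pairwise orthogonal B" "\<And>x. x \<in> B \<Longrightarrow> norm x = 1"
      "independent B" "span B = span A"
    using orthonormal_basis_subspace[OF subspace_span] by metis
  obtain l where l: "set l = B" "distinct l"
    using finite_distinct_list independent_imp_finite[OF B(3)] by blast
  have "orthonormal_list l"
    unfolding orthonormal_list_def
  proof (intro allI impI)
    fix i j assume ij: "i < length l" "j < length l"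
    then have B_ij: "l ! i \<in> B" "l ! j \<in> B" using l(1) by auto
    show "inner (l ! i) (l ! j) = (if i = j then 1 else 0)"
    proof (cases "i = j")
      case True
      then show ?thesis using B(2)[OF B_ij(1)] by (simp add: norm_eq_1)
    next
      case False
      then have "l ! i \<noteq> l ! j" using l(2) ij by (simp add: nth_eq_iff_index_eq)
      then show ?thesis using B(1) B_ij False by (auto simp: pairwise_def orthogonal_def)
    qed
  qed
  then show thesis using that l(1) B(4) by blast
qed

lemma null_sets_PiM_lborel_hyperplane:
  fixes \<beta> :: "'i \<Rightarrow> real"
  assumes "finite I" "j \<in> I" "\<beta> j \<noteq> 0"
  shows "{z \<in> space (PiM I (\<lambda>_. lborel)). (\<Sum>i\<in>I. z i * \<beta> i) = \<gamma>}
           \<in> null_sets (PiM I (\<lambda>_. lborel))"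
proof -
  interpret product_sigma_finite "\<lambda>_::'i. lborel :: real measure"
    by (simp add: product_sigma_finite_def lborel.sigma_finite_measure_axioms)
  let ?J = "I - {j}"
  let ?H = "{z \<in> space (PiM I (\<lambda>_. lborel)). (\<Sum>i\<in>I. z i * \<beta> i) = \<gamma>}"
  have I: "?J \<union> {j} = I" using assms(2) by auto
  have H_sets: "?H \<in> sets (PiM I (\<lambda>_. lborel))" by measurable
  \<comment> \<open>By Fubini, integrate over the \<open>j\<close>-th coordinate first: each fibre is a single point.\<close>
  have fibre_null: "emeasure (PiM {j} (\<lambda>_. lborel))
      ((\<lambda>y. merge ?J {j} (x, y)) -` ?H \<inter> space (PiM {j} (\<lambda>_. lborel))) = 0" for x
  proof -
    define c where "c = (\<gamma> - (\<Sum>i\<in>?J. x i * \<beta> i)) / \<beta> j"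
    have fibre: "(\<lambda>y. merge ?J {j} (x, y)) -` ?H \<inter> space (PiM {j} (\<lambda>_. lborel))
        \<subseteq> PiE {j} (\<lambda>_. {c})" (is "?F \<subseteq> _")
    proof
      fix y assume y: "y \<in> (\<lambda>y. merge ?J {j} (x, y)) -` ?H \<inter> space (PiM {j} (\<lambda>_. lborel))"
      have "(\<Sum>i\<in>I. merge ?J {j} (x, y) i * \<beta> i)
          = merge ?J {j} (x, y) j * \<beta> j + (\<Sum>i\<in>?J. merge ?J {j} (x, y) i * \<beta> i)"
        using assms(1,2) by (rule sum.remove)
      also have "\<dots> = y j * \<beta> j + (\<Sum>i\<in>?J. x i * \<beta> i)"
        by (simp add: merge_def)
      finally have "(\<Sum>i\<in>I. merge ?J {j} (x, y) i * \<beta> i)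
          = y j * \<beta> j + (\<Sum>i\<in>?J. x i * \<beta> i)" .
      then have "y j * \<beta> j + (\<Sum>i\<in>?J. x i * \<beta> i) = \<gamma>" using y by simp
      then have "y j = c" using assms(3) unfolding c_def by (simp add: field_simps)
      moreover have "y \<in> extensional {j}" using y by (simp add: space_PiM PiE_def)
      ultimately show "y \<in> PiE {j} (\<lambda>_. {c})" by (auto simp: PiE_def extensional_def)
    qed
    have point: "PiE {j} (\<lambda>_. {c}) \<in> null_sets (PiM {j} (\<lambda>_. lborel))"
    proof
      show "PiE {j} (\<lambda>_. {c}) \<in> sets (PiM {j} (\<lambda>_. lborel))"
        by (rule sets_PiM_I_finite) auto
      show "emeasure (PiM {j} (\<lambda>_. lborel)) (PiE {j} (\<lambda>_. {c})) = 0"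
        by (subst emeasure_PiM) auto
    qed
    have "emeasure (PiM {j} (\<lambda>_. lborel)) ?F \<le> 0"
      using emeasure_mono[OF fibre null_setsD2[OF point]] null_setsD1[OF point] by simp
    then show ?thesis by simp
  qed
  have "emeasure (PiM (?J \<union> {j}) (\<lambda>_. lborel)) ?H
      = (\<integral>\<^sup>+x. emeasure (PiM {j} (\<lambda>_. lborel))
           ((\<lambda>y. merge ?J {j} (x, y)) -` ?H \<inter> space (PiM {j} (\<lambda>_. lborel))) \<partial>PiM ?J (\<lambda>_. lborel))"
    by (rule emeasure_fold_integral) (use H_sets I assms(1) in auto)
  also have "\<dots> = 0" unfolding fibre_null by simp
  finally show ?thesis using H_sets I by (simp add: null_sets_def)
qed

lemma linear_level_set_borel:
  fixes g :: "'a::euclidean_space \<Rightarrow> 'b::euclidean_space"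
  assumes "linear g"
  shows "{y. g y = c} \<in> sets borel"
  using assms by (intro borel_closed closed_Collect_eq)
    (auto intro: linear_continuous_on linear_conv_bounded_linear[THEN iffD1])

lemma sets_lebesgue_on_affine [simp]: "sets (lebesgue_on_affine A) = sets borel"
  by (simp add: lebesgue_on_affine_def Let_def)

lemma null_sets_lebesgue_on_affine_level_set_real:
  fixes h :: "'a::euclidean_space \<Rightarrow> real"
  assumes "linear h" "u \<in> A" "v \<in> A" "h u \<noteq> h v"
  shows "{y. h y = \<gamma>} \<in> null_sets (lebesgue_on_affine A)"
proof -
  define a where "a = (SOME a. a \<in> A)"
  define bs where "bs = (SOME bs. orthonormal_list bs \<and> span (set bs) = span ((\<lambda>x. x - a) ` A))"
  define f where "f = (\<lambda>z. a + (\<Sum>i<length bs. z i *\<^sub>R bs ! i))"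
  let ?R = "PiM {..<length bs} (\<lambda>_. lborel :: real measure)"
  have a: "a \<in> A" unfolding a_def using assms(2) by (rule someI)
  have bs: "span (set bs) = span ((\<lambda>x. x - a) ` A)"
    unfolding bs_def
    by (rule someI2_ex) (use orthonormal_list_spanning[of "(\<lambda>x. x - a) ` A"] in metis)+
  have leb: "lebesgue_on_affine A = distr ?R borel f"
    unfolding lebesgue_on_affine_def Let_def a_def[symmetric] bs_def[symmetric] f_def ..
  have f_meas: "f \<in> borel_measurable ?R"
    unfolding f_def
    by (intro borel_measurable_add borel_measurable_sum borel_measurable_scaleR
        measurable_component_singleton) auto
  have level_sets: "{y. h y = \<gamma>} \<in> sets borel"
    using assms(1) by (rule linear_level_set_borel)
  have "\<exists>j<length bs. h (bs ! j) \<noteq> 0"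
  proof (rule ccontr)
    assume "\<not> ?thesis"
    then have "\<forall>b\<in>set bs. h b = 0" by (auto simp: in_set_conv_nth)
    then have "h (y - a) = 0" if "y \<in> A" for y
      using linear_eq_0_on_span[OF assms(1)] bs that by (blast intro: span_base)
    then show False
      using assms by (metis a linear_diff eq_iff_diff_eq_0)
  qed
  then obtain j where j: "j < length bs" "h (bs ! j) \<noteq> 0" by blast
  let ?H = "{z \<in> space ?R. (\<Sum>i<length bs. z i * h (bs ! i)) = \<gamma> - h a}"
  have "h (f z) = h a + (\<Sum>i<length bs. z i * h (bs ! i))" for z
    using assms(1) by (simp add: f_def linear_add linear_sum linear_scale)
  then have "f -` {y. h y = \<gamma>} \<inter> space ?R = ?H"
    by (auto simp: eq_diff_eq')
  then have "emeasure (lebesgue_on_affine A) {y. h y = \<gamma>} = emeasure ?R ?H"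
    unfolding leb by (simp add: emeasure_distr[OF f_meas level_sets])
  also have "\<dots> = 0"
    using null_sets_PiM_lborel_hyperplane[of "{..<length bs}" j "\<lambda>i. h (bs ! i)" "\<gamma> - h a"] j
    by (simp add: null_setsD1)
  finally show ?thesis using leb level_sets by (simp add: null_sets_def)
qed

lemma null_sets_lebesgue_on_affine_level_set:
  fixes g :: "'a::euclidean_space \<Rightarrow> 'b::euclidean_space"
  assumes "linear g" "u \<in> A" "v \<in> A" "g u \<noteq> g v"
  shows "{y. g y = c} \<in> null_sets (lebesgue_on_affine A)"
proof -
  define e where "e = g v - g u"
  have h: "linear (\<lambda>y. g y \<bullet> e)"
    using linear_compose[OF assms(1) bounded_linear.linear[OF bounded_linear_inner_left]]
    by (simp add: o_def)
  have "g v \<bullet> e - g u \<bullet> e = e \<bullet> e"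
    by (simp add: e_def inner_diff_left)
  then have "g u \<bullet> e \<noteq> g v \<bullet> e"
    using assms(4) by (auto simp: e_def)
  then have "{y. g y \<bullet> e = c \<bullet> e} \<in> null_sets (lebesgue_on_affine A)"
    by (rule null_sets_lebesgue_on_affine_level_set_real[OF h assms(2,3)])
  moreover have "{y. g y = c} \<in> sets (lebesgue_on_affine A)"
    using linear_level_set_borel[OF assms(1)] by simp
  moreover have "{y. g y = c} \<subseteq> {y. g y \<bullet> e = c \<bullet> e}" by blast
  ultimately show ?thesis by (rule null_sets_subset)
qed

lemma F_LP_iff:
  assumes "M1 \<in> C_LP S T"
  shows "x \<in> F_LP S T \<longleftrightarrow> (\<forall>M\<in>C_LP S T. x v* M = x v* M1)"
proof
  assume "x \<in> F_LP S T"
  then obtain b where "{x v* M | M. M \<in> C_LP S T} = {b}"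
    by (auto simp: F_LP_def card_1_singleton_iff)
  then have "x v* M = b" if "M \<in> C_LP S T" for M
    using that by (auto simp: set_eq_iff)
  then show "\<forall>M\<in>C_LP S T. x v* M = x v* M1"
    using assms by simp
next
  assume "\<forall>M\<in>C_LP S T. x v* M = x v* M1"
  then have "{x v* M | M. M \<in> C_LP S T} = {x v* M1}"
    using assms by blast
  then show "x \<in> F_LP S T" by (simp add: F_LP_def)
qed

theorem proposition3:
  fixes S :: "real^'s^'n" and T :: "real^'t^'n"
    and X :: "(real^'s) set"
    and M1 :: "real^'t^'s" and r :: real
    and P :: "(real^'t^'s) measure"
  assumes "finite X"
    and "M1 \<in> C_LP S T"
    and "0 < r"
    and "ball M1 r \<inter> affine hull (C_LP S T) \<subseteq> C_LP S T"
    and "prob_space P"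
    and "sets P = sets borel"
    and "absolutely_continuous (lebesgue_on_affine (C_LP S T)) P"
    and "AE M2 in P. M2 \<in> ball M1 r \<inter> affine hull (C_LP S T)"
  shows "AE M2 in P. \<forall>x\<in>X. x v* M1 = x v* M2 \<longrightarrow> x \<in> F_LP S T"
proof -
  have level_set_null: "{M. x v* M = x v* M1} \<in> null_sets P" if x: "x \<notin> F_LP S T" for x
  proof -
    obtain M where "M \<in> C_LP S T" "x v* M \<noteq> x v* M1"
      using x F_LP_iff[OF assms(2)] by blast
    then have "{M. x v* M = x v* M1} \<in> null_sets (lebesgue_on_affine (C_LP S T))"
      by (rule null_sets_lebesgue_on_affine_level_set[OF linear_vector_matrix_mult _ assms(2)])
    then show ?thesis
      using assms(7) by (auto simp: absolutely_continuous_def)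
  qed
  have "AE M2 in P. \<forall>x\<in>X - F_LP S T. M2 \<notin> {M. x v* M = x v* M1}"
    using assms(1) by (intro AE_finite_allI AE_not_in level_set_null) auto
  then show ?thesis
    by (rule eventually_mono) (metis DiffI mem_Collect_eq)
qed

end
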